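(* Fix integers $CW_{min}\ge 1$, $CW_{max}\ge CW_{min}$ and a retry limit $RL\ge 1$, and set $CW_0=CW_{min}$, $CW_i=\min\{CW_{max},2CW_{i-1}\}$ for $i>0$. Consider a single station operating in discrete virtual slots $t=0,1,2,\dots$ in the idealized regime of infinitely many contending stations, in which every transmission of the station collides. The station's retry counter starts at $0$; it makes its first transmission in a slot chosen uniformly at random from $\{0,1,\dots,CW_0-1\}$. Each transmission collides and increases the retry counter by one; if a transmission in slot $i$ raises the counter to a value $r<RL$, the next transmission takes place in slot $i+K$, where $K$ is uniform on $\{1,\dots,CW_r\}$ and independent of the past; once the counter reaches $RL$ the station makes no further transmissions. Define $a(t,r)$ for integers $t$ and $r\ge 0$ by $a(t,r)=0$ for $t<0$ and, for $t\ge 0$, $$a(t,r)=\begin{cases}\frac{1}{CW_0}, & r=0,\ 0\le t<CW_0,\\ 0, & r=0,\ t\ge CW_0,\\ 0, & r\ge RL,\\ \frac{1}{CW_r}\sum_{i=t-CW_r}^{t-1}a(i,r-1), & 0<r<RL,\end{cases}$$ and $$b(t,r)=\begin{cases}1-\sum_{i=0}^{t-1}a(i,r), & r=0,\\ \sum_{i=0}^{t-1}\bigl(a(i,r-1)-a(i,r)\bigr), & r>0.\end{cases}$$ Let $\Pr(TX\mid t,r)$ denote the probability that the station transmits in slot $t$, conditioned on the event that at the beginning of slot $t$ its retry counter equals $r$ (i.e. it has made exactly $r$ transmissions before slot $t$). Then, whenever $b(t,r)>0$, $$\Pr(TX\mid t,r)=\frac{a(t,r)}{b(t,r)}.$$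
   Context: This models the truncated binary exponential backoff of IEEE 802.11 (EDCA) for one station. Time is measured in virtual slots (the intervals between consecutive backoff-counter changes), so the backoff value drawn after a transmission determines directly the number of slots until the next attempt. The limit of infinitely many stations is interpreted as: the probability that a transmission of the station collides equals the probability that it transmits, i.e. every transmission collides. In this model $a(t,r)$ is the probability that the station transmits in slot $t$ with retry counter $r$, and $b(t,r)$ is the probability that its retry counter equals $r$ at the beginning of slot $t$. *)

theory Defs
  imports "HOL-Probability.Probability"
begin

primrec CW :: "nat \<Rightarrow> nat \<Rightarrow> nat \<Rightarrow> nat" where
  "CW CWmin CWmax 0 = CWmin"
| "CW CWmin CWmax (Suc i) = min CWmax (2 * CW CWmin CWmax i)"

primrec a_fun :: "nat \<Rightarrow> nat \<Rightarrow> nat \<Rightarrow> nat \<Rightarrow> int \<Rightarrow> real" where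
  "a_fun CWmin CWmax RL 0 t =
     (if t < 0 then 0
      else if RL \<le> 0 then 0
      else if t < int (CW CWmin CWmax 0) then 1 / real (CW CWmin CWmax 0) else 0)"
| "a_fun CWmin CWmax RL (Suc r) t =
     (if t < 0 then 0
      else if RL \<le> Suc r then 0
      else (1 / real (CW CWmin CWmax (Suc r))) *
           (\<Sum>i\<in>{t - int (CW CWmin CWmax (Suc r)) .. t - 1}. a_fun CWmin CWmax RL r i))"

fun b_fun :: "nat \<Rightarrow> nat \<Rightarrow> nat \<Rightarrow> nat \<Rightarrow> nat \<Rightarrow> real" where
  "b_fun CWmin CWmax RL 0 t = 1 - (\<Sum>i<t. a_fun CWmin CWmax RL 0 (int i))"
| "b_fun CWmin CWmax RL (Suc r) t =
     (\<Sum>i<t. a_fun CWmin CWmax RL r (int i) - a_fun CWmin CWmax RL (Suc r) (int i))"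

text \<open>Joint distribution of the first n transmission slots of the station (n \<le> RL):
  the first transmission is uniform on {0..CW_0-1}; the transmission following the one
  that raised the retry counter to r (0 < r < RL) happens K slots later, K uniform on
  {1..CW_r}, independent of the past.\<close>
primrec tx_times :: "nat \<Rightarrow> nat \<Rightarrow> nat \<Rightarrow> nat list pmf" where
  "tx_times CWmin CWmax 0 = return_pmf []"
| "tx_times CWmin CWmax (Suc n) =
     do { ts \<leftarrow> tx_times CWmin CWmax n;
          (if n = 0
           then map_pmf (\<lambda>k. [k]) (pmf_of_set {0..<CW CWmin CWmax 0})
           else map_pmf (\<lambda>k. ts @ [last ts + k]) (pmf_of_set {1..CW CWmin CWmax n})) }"

text \<open>All transmissions of the station (it stops after RL of them).\<close>
definition station :: "nat \<Rightarrow> nat \<Rightarrow> nat \<Rightarrow> nat list pmf" where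
  "station CWmin CWmax RL = tx_times CWmin CWmax RL"

definition retry_counter :: "nat list \<Rightarrow> nat \<Rightarrow> nat" where
  "retry_counter ts t = length (filter (\<lambda>s. s < t) ts)"

definition transmits :: "nat list \<Rightarrow> nat \<Rightarrow> bool" where
  "transmits ts t \<longleftrightarrow> t \<in> set ts"

end

theory Submission
  imports Defs
begin

text \<open>Let T(r) be the slot of the station's r-th transmission (r < RL). T(0) is uniform on
  {0..<CW 0}, and T(r) = T(r-1) + K with K uniform on {1..CW r} and independent of T(r-1), so the
  law of T(r) is exactly the convolution recursion defining a(., r). Transmission slots increase
  strictly, so the retry counter at slot t counts the j with T(j) < t. Hence "transmits in slot t
  with counter r" is the event T(r) = t, of probability a(t, r), and "counter > r" is the event
  T(r) < t, of probability sum of a(i, r) over i < t; differences of the latter give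
  P(counter = r) = b(t, r).\<close>

lemma CW_gt_0: "0 < CWmin \<Longrightarrow> 0 < CWmax \<Longrightarrow> 0 < CW CWmin CWmax n"
  by (induction n) auto

lemma a_fun_neg: "i < 0 \<Longrightarrow> a_fun CWmin CWmax RL r i = 0"
  by (cases r) auto

lemma a_fun_beyond_retry_limit: "RL \<le> r \<Longrightarrow> a_fun CWmin CWmax RL r i = 0"
  by (cases r) auto

lemma a_fun_Suc_nat:
  "a_fun CWmin CWmax RL (Suc r) (int t) =
     (if RL \<le> Suc r then 0
      else (\<Sum>i\<in>{t - CW CWmin CWmax (Suc r)..<t}. a_fun CWmin CWmax RL r (int i))
           / CW CWmin CWmax (Suc r))"
proof -
  let ?c = "CW CWmin CWmax (Suc r)" and ?a = "a_fun CWmin CWmax RL r"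
  have "(\<Sum>i\<in>{t - ?c..<t}. ?a (int i)) = (\<Sum>i\<in>int ` {t - ?c..<t}. ?a i)"
    by (simp add: sum.reindex)
  also have "\<dots> = (\<Sum>i\<in>{int t - int ?c .. int t - 1}. ?a i)"
  proof (rule sum.mono_neutral_left)
    show "\<forall>i\<in>{int t - int ?c .. int t - 1} - int ` {t - ?c..<t}. ?a i = 0"
    proof
      fix i assume i: "i \<in> {int t - int ?c .. int t - 1} - int ` {t - ?c..<t}"
      have "i < 0"
      proof (rule ccontr)
        assume "\<not> i < 0"
        then have "nat i \<in> {t - ?c..<t}" and "i = int (nat i)" using i by auto
        then show False using i by blast
      qed
      then show "?a i = 0" by (rule a_fun_neg)
    qed
  qed auto
  finally show ?thesis by simp
qed

lemma pmf_add_uniform: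
  fixes D :: "nat pmf"
  assumes "0 < c"
  shows "pmf (bind_pmf D (\<lambda>x. map_pmf ((+) x) (pmf_of_set {1..c}))) t
         = (\<Sum>x\<in>{t - c..<t}. pmf D x) / c"
proof -
  have shifted: "pmf (map_pmf ((+) x) (pmf_of_set {1..c})) t = indicator {t - c..<t} x / c" for x
  proof -
    have "map_pmf ((+) x) (pmf_of_set {1..c}) = pmf_of_set {x + 1..x + c}"
      using assms by (subst map_pmf_of_set_inj) (auto simp: image_add_atLeastAtMost add.commute)
    moreover have "t \<in> {x + 1..x + c} \<longleftrightarrow> x \<in> {t - c..<t}"
      by auto
    ultimately show ?thesis
      using assms by (simp add: indicator_def)
  qed
  have "pmf (bind_pmf D (\<lambda>x. map_pmf ((+) x) (pmf_of_set {1..c}))) t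
        = (\<Sum>x\<in>{t - c..<t}. indicator {t - c..<t} x / c * pmf D x)"
    unfolding pmf_bind shifted by (rule integral_measure_pmf_real) (auto simp: indicator_def)
  also have "\<dots> = (\<Sum>x\<in>{t - c..<t}. pmf D x) / c"
    by (simp add: sum_divide_distrib)
  finally show ?thesis .
qed

lemma nth_less_iff_less_length_filter:
  fixes ts :: "'a::linorder list"
  assumes "sorted_wrt (<) ts" and "j < length ts"
  shows "j < length (filter (\<lambda>s. s < t) ts) \<longleftrightarrow> ts ! j < t"
  using assms
proof (induction ts arbitrary: j)
  case (Cons x xs)
  show ?case
  proof (cases "x < t")
    case True
    then show ?thesis using Cons by (cases j) auto
  next
    case False
    with Cons.prems have none_less: "\<forall>s\<in>set (x # xs). \<not> s < t"
      by auto
    then have "filter (\<lambda>s. s < t) (x # xs) = []"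
      by (simp add: filter_empty_conv)
    moreover have "\<not> (x # xs) ! j < t"
      using none_less nth_mem[OF Cons.prems(2)] by blast
    ultimately show ?thesis by simp
  qed
qed simp

lemma length_filter_less_nth:
  fixes ts :: "'a::linorder list"
  assumes "sorted_wrt (<) ts" and "k < length ts"
  shows "length (filter (\<lambda>s. s < ts ! k) ts) = k"
  using assms
proof (induction ts arbitrary: k)
  case (Cons x xs)
  then show ?case
    by (cases k) (auto simp: filter_empty_conv less_not_sym)
qed simp

lemma sorted_wrt_less_le_last:
  fixes ts :: "'a::linorder list"
  assumes "sorted_wrt (<) ts" and "s \<in> set ts"
  shows "s \<le> last ts"
  using assms by (induction ts) (auto simp: less_imp_le)

lemma mem_and_length_filter_less_iff_nth:
  fixes ts :: "'a::linorder list"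
  assumes "sorted_wrt (<) ts"
  shows "t \<in> set ts \<and> length (filter (\<lambda>s. s < t) ts) = r \<longleftrightarrow> r < length ts \<and> ts ! r = t"
  using length_filter_less_nth[OF assms] by (auto simp: in_set_conv_nth)

lemma measure_pmf_prob_Collect_cong:
  assumes "\<And>x. x \<in> set_pmf p \<Longrightarrow> P x \<longleftrightarrow> Q x"
  shows "measure_pmf.prob p {x. P x} = measure_pmf.prob p {x. Q x}"
  using assms by (intro measure_prob_cong_0) (auto simp: pmf_eq_0_set_pmf)

context
  fixes CWmin CWmax :: nat
  assumes CW_pos: "\<And>n. 0 < CW CWmin CWmax n"
begin

lemma set_pmf_tx_times:
  assumes "ts \<in> set_pmf (tx_times CWmin CWmax n)"
  shows "length ts = n \<and> sorted_wrt (<) ts"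
  using assms
proof (induction n arbitrary: ts)
  case (Suc n)
  then obtain ts0 where ts0: "ts0 \<in> set_pmf (tx_times CWmin CWmax n)"
    and ts: "ts \<in> set_pmf (if n = 0
           then map_pmf (\<lambda>k. [k]) (pmf_of_set {0..<CW CWmin CWmax 0})
           else map_pmf (\<lambda>k. ts0 @ [last ts0 + k]) (pmf_of_set {1..CW CWmin CWmax n}))"
    by auto
  note IH = Suc.IH[OF ts0]
  show ?case
  proof (cases "n = 0")
    case True
    then show ?thesis using ts CW_pos[of 0] by auto
  next
    case False
    then obtain k where k: "0 < k" "ts = ts0 @ [last ts0 + k]"
      using ts CW_pos[of n] by auto
    have "\<forall>s\<in>set ts0. s < last ts0 + k"
      using IH k(1) sorted_wrt_less_le_last[of ts0] by fastforce
    then show ?thesis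
      using IH k by (auto simp: sorted_wrt_append)
  qed
qed simp

lemma map_pmf_take_tx_times:
  assumes "n \<le> m"
  shows "map_pmf (take n) (tx_times CWmin CWmax m) = tx_times CWmin CWmax n"
  using assms
proof (induction m)
  case (Suc m)
  show ?case
  proof (cases "n = Suc m")
    case True
    then have "map_pmf (take n) (tx_times CWmin CWmax (Suc m)) = map_pmf id (tx_times CWmin CWmax (Suc m))"
      by (intro map_pmf_cong refl) (simp add: set_pmf_tx_times del: tx_times.simps)
    then show ?thesis using True by simp
  next
    case False
    with Suc.prems have "n \<le> m" by simp
    have "map_pmf (take n) (tx_times CWmin CWmax (Suc m)) = map_pmf (take n) (tx_times CWmin CWmax m)"
    proof (cases "m = 0")
      case True
      with \<open>n \<le> m\<close> show ?thesis by (simp add: map_pmf_def bind_return_pmf)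
    next
      case False
      have "map_pmf (take n) (tx_times CWmin CWmax (Suc m))
          = bind_pmf (tx_times CWmin CWmax m)
              (\<lambda>ts. map_pmf (\<lambda>k. take n (ts @ [last ts + k])) (pmf_of_set {1..CW CWmin CWmax m}))"
        using False by (simp add: map_bind_pmf pmf.map_comp o_def)
      also have "\<dots> = bind_pmf (tx_times CWmin CWmax m) (\<lambda>ts. return_pmf (take n ts))"
        using \<open>n \<le> m\<close> by (intro bind_pmf_cong) (auto dest: set_pmf_tx_times)
      finally show ?thesis by (simp add: map_pmf_def)
    qed
    then show ?thesis using Suc.IH \<open>n \<le> m\<close> by simp
  qed
qed simp

lemma map_pmf_nth_tx_times:
  assumes "r < n"
  shows "map_pmf (\<lambda>ts. ts ! r) (tx_times CWmin CWmax n)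
         = map_pmf (\<lambda>ts. ts ! r) (tx_times CWmin CWmax (Suc r))"
proof -
  have "map_pmf (\<lambda>ts. ts ! r) (tx_times CWmin CWmax n)
        = map_pmf (\<lambda>ts. ts ! r) (map_pmf (take (Suc r)) (tx_times CWmin CWmax n))"
    by (simp add: pmf.map_comp o_def)
  then show ?thesis
    using assms by (simp add: map_pmf_take_tx_times)
qed

lemma nth_tx_times_Suc:
  "map_pmf (\<lambda>ts. ts ! Suc r) (tx_times CWmin CWmax (Suc (Suc r)))
   = bind_pmf (map_pmf (\<lambda>ts. ts ! r) (tx_times CWmin CWmax (Suc r)))
       (\<lambda>x. map_pmf ((+) x) (pmf_of_set {1..CW CWmin CWmax (Suc r)}))"
proof -
  let ?U = "pmf_of_set {1..CW CWmin CWmax (Suc r)}"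
  have "map_pmf (\<lambda>ts. ts ! Suc r) (tx_times CWmin CWmax (Suc (Suc r)))
        = bind_pmf (tx_times CWmin CWmax (Suc r))
            (\<lambda>ts. map_pmf (\<lambda>k. (ts @ [last ts + k]) ! Suc r) ?U)"
    by (simp add: map_bind_pmf pmf.map_comp o_def)
  also have "\<dots> = bind_pmf (tx_times CWmin CWmax (Suc r)) (\<lambda>ts. map_pmf ((+) (ts ! r)) ?U)"
  proof (intro bind_pmf_cong refl)
    fix ts
    assume "ts \<in> set_pmf (tx_times CWmin CWmax (Suc r))"
    then have "length ts = Suc r"
      by (simp add: set_pmf_tx_times del: tx_times.simps)
    moreover from this have "ts \<noteq> []"
      by auto
    ultimately show "map_pmf (\<lambda>k. (ts @ [last ts + k]) ! Suc r) ?U = map_pmf ((+) (ts ! r)) ?U"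
      by (simp add: nth_append last_conv_nth)
  qed
  finally show ?thesis
    by (simp add: bind_map_pmf)
qed

lemma pmf_nth_tx_times:
  assumes "r < RL" and "r < n"
  shows "pmf (map_pmf (\<lambda>ts. ts ! r) (tx_times CWmin CWmax n)) t = a_fun CWmin CWmax RL r (int t)"
  using assms
proof (induction r arbitrary: n t)
  case 0
  have "map_pmf (\<lambda>ts. ts ! 0) (tx_times CWmin CWmax n) = pmf_of_set {0..<CW CWmin CWmax 0}"
    using 0 by (subst map_pmf_nth_tx_times) (simp_all add: pmf.map_comp o_def)
  then show ?case
    using 0 CW_pos[of 0] by (simp add: indicator_def)
next
  case (Suc r)
  then have "r < RL"
    by simp
  have "pmf (map_pmf (\<lambda>ts. ts ! Suc r) (tx_times CWmin CWmax n)) t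
        = (\<Sum>x\<in>{t - CW CWmin CWmax (Suc r)..<t}. a_fun CWmin CWmax RL r (int x))
          / CW CWmin CWmax (Suc r)"
    by (simp only: map_pmf_nth_tx_times[OF \<open>Suc r < n\<close>] nth_tx_times_Suc
        pmf_add_uniform[OF CW_pos] Suc.IH[OF \<open>r < RL\<close> lessI])
  also have "\<dots> = a_fun CWmin CWmax RL (Suc r) (int t)"
    using Suc.prems by (simp add: a_fun_Suc_nat del: a_fun.simps)
  finally show ?case .
qed

lemma prob_transmits_retry_counter_eq:
  "measure_pmf.prob (station CWmin CWmax RL) {ts. transmits ts t \<and> retry_counter ts t = r}
   = a_fun CWmin CWmax RL r (int t)"
proof -
  have "transmits ts t \<and> retry_counter ts t = r \<longleftrightarrow> r < RL \<and> ts ! r = t"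
    if "ts \<in> set_pmf (station CWmin CWmax RL)" for ts
    using that set_pmf_tx_times[of ts RL] mem_and_length_filter_less_iff_nth[of ts t r]
    by (simp add: station_def transmits_def retry_counter_def)
  then have "measure_pmf.prob (station CWmin CWmax RL) {ts. transmits ts t \<and> retry_counter ts t = r}
        = measure_pmf.prob (station CWmin CWmax RL) {ts. r < RL \<and> ts ! r = t}"
    by (rule measure_pmf_prob_Collect_cong)
  also have "\<dots> = a_fun CWmin CWmax RL r (int t)"
    using pmf_nth_tx_times[of r RL RL t]
    by (cases "r < RL")
       (simp_all add: station_def vimage_def a_fun_beyond_retry_limit flip: measure_pmf_single)
  finally show ?thesis .
qed

lemma prob_retry_counter_greater:
  "measure_pmf.prob (station CWmin CWmax RL) {ts. r < retry_counter ts t}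
   = (\<Sum>i<t. a_fun CWmin CWmax RL r (int i))"
proof -
  have "r < retry_counter ts t \<longleftrightarrow> r < RL \<and> ts ! r < t"
    if "ts \<in> set_pmf (station CWmin CWmax RL)" for ts
  proof -
    have "length ts = RL" and "sorted_wrt (<) ts"
      using that set_pmf_tx_times by (simp_all add: station_def)
    moreover have "retry_counter ts t \<le> length ts"
      by (simp add: retry_counter_def)
    ultimately show ?thesis
      using nth_less_iff_less_length_filter[of ts r t] unfolding retry_counter_def
      by (cases "r < RL") auto
  qed
  then have "measure_pmf.prob (station CWmin CWmax RL) {ts. r < retry_counter ts t}
        = measure_pmf.prob (station CWmin CWmax RL) {ts. r < RL \<and> ts ! r < t}"
    by (rule measure_pmf_prob_Collect_cong)
  also have "\<dots> = (\<Sum>i<t. a_fun CWmin CWmax RL r (int i))"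
  proof (cases "r < RL")
    case True
    have "measure_pmf.prob (station CWmin CWmax RL) {ts. ts ! r < t}
          = measure_pmf.prob (map_pmf (\<lambda>ts. ts ! r) (tx_times CWmin CWmax RL)) {..<t}"
      by (simp add: station_def vimage_def)
    also have "\<dots> = (\<Sum>i<t. a_fun CWmin CWmax RL r (int i))"
      using True by (subst measure_measure_pmf_finite) (simp_all add: pmf_nth_tx_times)
    finally show ?thesis
      using True by simp
  qed (simp add: a_fun_beyond_retry_limit)
  finally show ?thesis .
qed

lemma prob_retry_counter_eq:
  "measure_pmf.prob (station CWmin CWmax RL) {ts. retry_counter ts t = r} = b_fun CWmin CWmax RL r t"
proof (cases r)
  case 0
  have "{ts. retry_counter ts t = 0} = UNIV - {ts. 0 < retry_counter ts t}"
    by auto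
  then show ?thesis
    using 0 measure_pmf.prob_compl[of "{ts. 0 < retry_counter ts t}" "station CWmin CWmax RL"]
    by (simp add: prob_retry_counter_greater)
next
  case (Suc r')
  have "{ts. retry_counter ts t = Suc r'}
        = {ts. r' < retry_counter ts t} - {ts. Suc r' < retry_counter ts t}"
    by auto
  then show ?thesis
    using Suc by (simp add: measure_pmf.finite_measure_Diff subset_eq sum_subtractf
        prob_retry_counter_greater)
qed

end

theorem lemma1:
  fixes CWmin CWmax RL t r :: nat
  assumes "CWmin \<ge> 1" and "CWmax \<ge> CWmin" and "RL \<ge> 1"
    and "b_fun CWmin CWmax RL r t > 0"
  shows "cond_prob (measure_pmf (station CWmin CWmax RL))
           (\<lambda>ts. transmits ts t) (\<lambda>ts. retry_counter ts t = r)
         = a_fun CWmin CWmax RL r (int t) / b_fun CWmin CWmax RL r t"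
proof -
  \<comment> \<open>Numerator and denominator are \<open>a\<close> and \<open>b\<close> themselves.\<close>
  have "0 < CW CWmin CWmax n" for n
    using assms(1,2) by (intro CW_gt_0) auto
  then show ?thesis
    unfolding cond_prob_def
    using prob_transmits_retry_counter_eq prob_retry_counter_eq by simp
qed

end
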